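(* Equip $\mathbb{R}^{1,1}$ with the Minkowski inner product $x\cdot y=-x_0y_0+x_1y_1$. Let $\theta_0,\theta_1,\theta_2\in\mathbb{R}$ with $\theta_0\neq\theta_1$ and $\theta_0\neq\theta_2$, and let $P_i=(\sinh\theta_i,\cosh\theta_i)$ for $i=0,1,2$; these are points on the branch $x_1>0$ of the hyperbola $-x_0^2+x_1^2=1$. Then the chords $P_0P_1$ and $P_0P_2$ are timelike, and the pseudo-angle $\theta$ between them satisfies $$\cosh^2(\theta)=\cosh^2\left(\frac{\theta_1-\theta_2}{2}\right).$$ In particular, $\theta$ does not depend on the position of $P_0$ (i.e. on $\theta_0$).
   Context: A vector $x\in\mathbb{R}^{1,1}$ is timelike if $x\cdot x<0$ and spacelike if $x\cdot x>0$. For two vectors $x,y$ that are both timelike or both spacelike, one has $(x\cdot y)^2\ge (x\cdot x)(y\cdot y)$, and the pseudo-angle $\theta\ge 0$ between them is defined by $\cosh^2(\theta)=\frac{(x\cdot y)^2}{(x\cdot x)(y\cdot y)}$. The pseudo-angle between two chords (line segments) is the pseudo-angle between their direction vectors. *)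

theory Defs
  imports Complex_Main
begin

definition mink :: "real \<times> real \<Rightarrow> real \<times> real \<Rightarrow> real" where
  "mink x y = - fst x * fst y + snd x * snd y"

definition timelike :: "real \<times> real \<Rightarrow> bool" where
  "timelike x \<longleftrightarrow> mink x x < 0"

definition spacelike :: "real \<times> real \<Rightarrow> bool" where
  "spacelike x \<longleftrightarrow> mink x x > 0"

definition pseudo_angle :: "real \<times> real \<Rightarrow> real \<times> real \<Rightarrow> real" where
  "pseudo_angle x y = (THE t. t \<ge> 0 \<and> cosh t ^ 2 = (mink x y)^2 / (mink x x * mink y y))"

definition chord :: "real \<times> real \<Rightarrow> real \<times> real \<Rightarrow> real \<times> real" where
  "chord P Q = (fst Q - fst P, snd Q - snd P)"

definition hyp_pt :: "real \<Rightarrow> real \<times> real" where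
  "hyp_pt t = (sinh t, cosh t)"

end

theory Submission
  imports Defs
begin

text \<open>With m = (s + t)/2 and d = (t - s)/2, the chord from hyp_pt s to hyp_pt t is
  2 sinh d times the unit timelike vector (cosh m, sinh m). Two such unit vectors have
  Minkowski product -cosh of the difference of their parameters, so the chords from
  hyp_pt t0 to hyp_pt t1 and hyp_pt t2 meet at the pseudo-angle |t1 - t2|/2: the
  parameter t0 only affects the lengths of the chords.\<close>

lemma chord_hyp_pt:
  "chord (hyp_pt s) (hyp_pt t) =
     (2 * sinh ((t - s) / 2) * cosh ((s + t) / 2), 2 * sinh ((t - s) / 2) * sinh ((s + t) / 2))"
proof -
  define m d where "m = (s + t) / 2" and "d = (t - s) / 2"
  have "t = m + d" "s = m - d" unfolding m_def d_def by (simp_all add: field_simps)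
  then show ?thesis
    unfolding chord_def hyp_pt_def m_def [symmetric] d_def [symmetric]
    by (simp add: sinh_add sinh_diff cosh_add cosh_diff)
qed

lemma mink_chord_hyp_pt:
  "mink (chord (hyp_pt s) (hyp_pt t)) (chord (hyp_pt s) (hyp_pt u)) =
     - 4 * sinh ((t - s) / 2) * sinh ((u - s) / 2) * cosh ((t - u) / 2)"
proof -
  have "(t - u) / 2 = (s + t) / 2 - (s + u) / 2" by (simp add: field_simps)
  then have "cosh ((t - u) / 2) =
      cosh ((s + t) / 2) * cosh ((s + u) / 2) - sinh ((s + t) / 2) * sinh ((s + u) / 2)"
    by (simp only: cosh_diff)
  then show ?thesis
    unfolding chord_hyp_pt mink_def by (simp only:) (simp add: algebra_simps)
qed

lemma timelike_chord_hyp_pt_iff: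
  "timelike (chord (hyp_pt s) (hyp_pt t)) \<longleftrightarrow> s \<noteq> t"
  using mink_chord_hyp_pt [of s t t]
  by (auto simp add: timelike_def simp flip: power2_eq_square)

lemma cosh_abs_real: "cosh \<bar>x :: real\<bar> = cosh x"
  by (simp add: abs_if)

lemma pseudo_angle_eqI:
  assumes "(mink x y)\<^sup>2 / (mink x x * mink y y) = cosh a ^ 2"
  shows "pseudo_angle x y = \<bar>a\<bar>"
  unfolding pseudo_angle_def
proof (rule the_equality)
  show "\<bar>a\<bar> \<ge> 0 \<and> cosh \<bar>a\<bar> ^ 2 = (mink x y)\<^sup>2 / (mink x x * mink y y)"
    using assms by (simp add: cosh_abs_real)
next
  fix t
  assume t: "t \<ge> 0 \<and> cosh t ^ 2 = (mink x y)\<^sup>2 / (mink x x * mink y y)"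
  then have "cosh t ^ 2 = cosh \<bar>a\<bar> ^ 2"
    using assms by (simp add: cosh_abs_real)
  then have "cosh t = cosh \<bar>a\<bar>"
    by (simp add: power2_eq_iff_nonneg)
  then show "t = \<bar>a\<bar>"
    using t by (metis abs_ge_zero cosh_real_nonneg_le_iff order_antisym order_refl)
qed

lemma pseudo_angle_chords_hyp_pt:
  assumes "s \<noteq> t" and "s \<noteq> u"
  shows "pseudo_angle (chord (hyp_pt s) (hyp_pt t)) (chord (hyp_pt s) (hyp_pt u)) = \<bar>(t - u) / 2\<bar>"
proof (rule pseudo_angle_eqI)
  have "sinh ((t - s) / 2) \<noteq> 0" "sinh ((u - s) / 2) \<noteq> 0"
    using assms by simp_all
  then show "(mink (chord (hyp_pt s) (hyp_pt t)) (chord (hyp_pt s) (hyp_pt u)))\<^sup>2 /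
      (mink (chord (hyp_pt s) (hyp_pt t)) (chord (hyp_pt s) (hyp_pt t)) *
       mink (chord (hyp_pt s) (hyp_pt u)) (chord (hyp_pt s) (hyp_pt u))) = cosh ((t - u) / 2) ^ 2"
    unfolding mink_chord_hyp_pt by (simp add: field_simps power2_eq_square)
qed

theorem mainTheorem1:
  fixes t0 t1 t2 :: real
  assumes "t0 \<noteq> t1" and "t0 \<noteq> t2"
  shows "timelike (chord (hyp_pt t0) (hyp_pt t1))
       \<and> timelike (chord (hyp_pt t0) (hyp_pt t2))
       \<and> cosh (pseudo_angle (chord (hyp_pt t0) (hyp_pt t1)) (chord (hyp_pt t0) (hyp_pt t2))) ^ 2
           = cosh ((t1 - t2) / 2) ^ 2"
  using assms by (simp add: timelike_chord_hyp_pt_iff pseudo_angle_chords_hyp_pt cosh_abs_real)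

end
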